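(* Let $\{\mathcal H,\Gamma_0,\Gamma_1\}$ be a unitary boundary triple for $A^*$ with $A_*=\operatorname{dom}\Gamma$, Weyl function $M(\cdot)$, $A_0=\ker\Gamma_0$. The following are equivalent: (i) $A_0$ is essentially selfadjoint and $\Gamma_1$ is bounded on $A_*$ with respect to the graph norm (the norm of $\mathfrak H^2$); (ii) $A_0$ is selfadjoint and $\Gamma_1\upharpoonright\widehat{\mathfrak N}_\lambda(A_* )$ is bounded for some (equivalently every) $\lambda\in\mathbb C\setminus\mathbb R$; (iii) for some (equivalently every) $\lambda\in\mathbb C\setminus\mathbb R$ the form $\mathfrak t_{-M(\lambda)^{-1}}$ has a positive lower bound, i.e. there is $c>0$ with $\mathfrak t_{-M(\lambda)^{-1}}[u,u]\ge c\|u\|^2$ for all $u\in\operatorname{ran}M(\lambda)$. If one of these holds, then $\{\mathcal H,\Gamma_0,\Gamma_1\}$ is a B-generalized boundary triple.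
   Context: $A$ closed symmetric relation in $\mathfrak H$. Unitary boundary triple for $A^*$: a linear operator $\Gamma=\{\Gamma_0,\Gamma_1\}$ from $\mathfrak H^2$ to $\mathcal H^2$ with $\operatorname{dom}\Gamma\subset A^*$ dense in $A^*$ and $\Gamma^{-1}=\Gamma^{[*]}$, where $\Gamma^{[*]}=\{\{\{k,k'\},\{g,g'\}\}:(f',g)-(f,g')=(h',k)-(h,k')\ \forall\{\{f,f'\},\{h,h'\}\}\in\Gamma\}$. B-generalized boundary triple: additionally $\operatorname{ran}\Gamma_0=\mathcal H$ and $\ker\Gamma_0$ selfadjoint (only Green's identity, not unitarity, is required in the general definition). $\widehat{\mathfrak N}_\lambda(A_* )=\{\{f,\lambda f\}\in A_*\}$. Weyl function: $M(\lambda)\Gamma_0\hat f_\lambda=\Gamma_1\hat f_\lambda$, $\hat f_\lambda\in\widehat{\mathfrak N}_\lambda(A_* )$; $\ker M(\lambda)=\{0\}$. For an operator $F$, $\mathfrak t_F[u,v]=\frac1{\lambda-\bar\lambda}[(Fu,v)-(u,Fv)]$ on $\operatorname{dom}F$. *)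

theory Defs
  imports "HOL-Analysis.Analysis"
begin

class complex_vector = real_vector +
  fixes scaleC :: "complex \<Rightarrow> 'a \<Rightarrow> 'a"
  assumes scaleC_add_right: "scaleC a (x + y) = scaleC a x + scaleC a y"
    and scaleC_add_left: "scaleC (a + b) x = scaleC a x + scaleC b x"
    and scaleC_scaleC: "scaleC a (scaleC b x) = scaleC (a * b) x"
    and scaleC_one: "scaleC 1 x = x"
    and scaleR_scaleC: "scaleR r x = scaleC (complex_of_real r) x"

instantiation prod :: (complex_vector, complex_vector) complex_vector
begin
definition scaleC_prod_def: "scaleC c x = (scaleC c (fst x), scaleC c (snd x))"
instance
  by standard (auto simp: scaleC_prod_def scaleC_add_right scaleC_add_left
      scaleC_scaleC scaleC_one scaleR_scaleC scaleR_prod_def)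
end

class complex_inner = complex_vector + real_normed_vector +
  fixes cinner :: "'a \<Rightarrow> 'a \<Rightarrow> complex"
  assumes cinner_commute: "cinner x y = cnj (cinner y x)"
    and cinner_add_left: "cinner (x + y) z = cinner x z + cinner y z"
    and cinner_scaleC_left: "cinner (scaleC r x) y = r * cinner x y"
    and cinner_ge_zero: "0 \<le> Re (cinner x x)"
    and cinner_eq_zero_iff: "cinner x x = 0 \<longleftrightarrow> x = 0"
    and norm_eq_sqrt_cinner: "norm x = sqrt (Re (cinner x x))"

class chilbert = complex_inner + complete_space

instantiation complex :: chilbert
begin
definition scaleC_complex_def: "scaleC c (x::complex) = c * x"
definition cinner_complex_def: "cinner (x::complex) y = x * cnj y"
instance
proof
  fix x :: complex
  show "norm x = sqrt (Re (cinner x x))"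
    by (simp add: cinner_complex_def complex_mod_sqrt_Re_mult_cnj)
next
  fix x :: complex
  show "cinner x x = 0 \<longleftrightarrow> x = 0"
    by (simp add: cinner_complex_def)
qed (auto simp: scaleC_complex_def cinner_complex_def algebra_simps scaleR_conv_of_real
       complex_mult_cnj)
end

definition csubspace :: "'a::complex_vector set \<Rightarrow> bool" where
  "csubspace S \<longleftrightarrow> 0 \<in> S \<and> (\<forall>x\<in>S. \<forall>y\<in>S. x + y \<in> S) \<and> (\<forall>c. \<forall>x\<in>S. scaleC c x \<in> S)"

definition adjoint_rel :: "('a::complex_inner \<times> 'a) set \<Rightarrow> ('a \<times> 'a) set" where
  "adjoint_rel A = {(g, g'). \<forall>(f, f') \<in> A. cinner f' g = cinner f g'}"

definition closed_symmetric :: "('a::complex_inner \<times> 'a) set \<Rightarrow> bool" where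
  "closed_symmetric A \<longleftrightarrow> csubspace A \<and> closed A \<and> A \<subseteq> adjoint_rel A"

definition selfadjoint_rel :: "('a::complex_inner \<times> 'a) set \<Rightarrow> bool" where
  "selfadjoint_rel A \<longleftrightarrow> A = adjoint_rel A"

definition ess_selfadjoint_rel :: "('a::complex_inner \<times> 'a) set \<Rightarrow> bool" where
  "ess_selfadjoint_rel A \<longleftrightarrow> selfadjoint_rel (closure A)"

definition linear_op :: "('a::complex_vector \<times> 'b::complex_vector) set \<Rightarrow> bool" where
  "linear_op G \<longleftrightarrow> csubspace G \<and> single_valued G"

definition bdry_adj ::
  "(('a::complex_inner \<times> 'a) \<times> ('b::complex_inner \<times> 'b)) set \<Rightarrow> (('b \<times> 'b) \<times> ('a \<times> 'a)) set" where
  "bdry_adj G = {((k, k'), (g, g')). \<forall>((f, f'), (h, h')) \<in> G.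
      cinner f' g - cinner f g' = cinner h' k - cinner h k'}"

definition unitary_bt ::
  "('a::complex_inner \<times> 'a) set \<Rightarrow> (('a \<times> 'a) \<times> ('b::complex_inner \<times> 'b)) set \<Rightarrow> bool" where
  "unitary_bt A G \<longleftrightarrow> closed_symmetric A \<and> linear_op G \<and>
     Domain G \<subseteq> adjoint_rel A \<and> adjoint_rel A \<subseteq> closure (Domain G) \<and>
     converse G = bdry_adj G"

definition green_identity :: "(('a::complex_inner \<times> 'a) \<times> ('b::complex_inner \<times> 'b)) set \<Rightarrow> bool" where
  "green_identity G \<longleftrightarrow> (\<forall>((f, f'), (h, h')) \<in> G. \<forall>((g, g'), (k, k')) \<in> G.
      cinner f' g - cinner f g' = cinner h' k - cinner h k')"

definition ran_Gamma0 :: "(('a \<times> 'a) \<times> ('b \<times> 'b)) set \<Rightarrow> 'b set" where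
  "ran_Gamma0 G = {h. \<exists>x h'. (x, (h, h')) \<in> G}"

definition ker_Gamma0 :: "(('a \<times> 'a) \<times> ('b::zero \<times> 'b)) set \<Rightarrow> ('a \<times> 'a) set" where
  "ker_Gamma0 G = {x. \<exists>h'. (x, (0, h')) \<in> G}"

definition B_generalized_bt ::
  "('a::complex_inner \<times> 'a) set \<Rightarrow> (('a \<times> 'a) \<times> ('b::complex_inner \<times> 'b)) set \<Rightarrow> bool" where
  "B_generalized_bt A G \<longleftrightarrow> closed_symmetric A \<and> linear_op G \<and>
     Domain G \<subseteq> adjoint_rel A \<and> adjoint_rel A \<subseteq> closure (Domain G) \<and>
     green_identity G \<and> ran_Gamma0 G = UNIV \<and> selfadjoint_rel (ker_Gamma0 G)"

definition Nhat :: "complex \<Rightarrow> (('a::complex_vector \<times> 'a) \<times> 'c) set \<Rightarrow> ('a \<times> 'a) set" where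
  "Nhat z G = {(f, scaleC z f) | f. (f, scaleC z f) \<in> Domain G}"

text \<open>Weyl function, as a relation in \<open>\<HH>\<close>: \<open>M(z) = \<Gamma>(\<N>\<^sub>z(A\<^sub>*))\<close>.\<close>
definition weyl :: "(('a::complex_vector \<times> 'a) \<times> ('b \<times> 'b)) set \<Rightarrow> complex \<Rightarrow> ('b \<times> 'b) set" where
  "weyl G z = {(h, h'). \<exists>f. ((f, scaleC z f), (h, h')) \<in> G}"

text \<open>\<open>\<Gamma>\<^sub>1\<close> restricted to \<open>S\<close> is bounded (w.r.t. the norm of \<open>\<h>\<^sup>2\<close>, i.e. the graph norm).\<close>
definition Gamma1_bounded_on :: "(('a::real_normed_vector \<times> 'a) \<times> ('b::real_normed_vector \<times> 'b)) set \<Rightarrow> ('a \<times> 'a) set \<Rightarrow> bool" where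
  "Gamma1_bounded_on G S \<longleftrightarrow>
     (\<exists>C. \<forall>x h h'. x \<in> S \<and> (x, (h, h')) \<in> G \<longrightarrow> norm h' \<le> C * norm x)"

definition op_app :: "('b \<times> 'b) set \<Rightarrow> 'b \<Rightarrow> 'b" where
  "op_app F u = (THE v. (u, v) \<in> F)"

definition neg_inv :: "('b::uminus \<times> 'b) set \<Rightarrow> ('b \<times> 'b) set" where
  "neg_inv R = {(h', - h) | h h'. (h, h') \<in> R}"

definition form_t :: "complex \<Rightarrow> ('b::complex_inner \<times> 'b) set \<Rightarrow> 'b \<Rightarrow> 'b \<Rightarrow> complex" where
  "form_t z F u v = (cinner (op_app F u) v - cinner u (op_app F v)) / (z - cnj z)"

text \<open>\<open>\<t>\<^sub>F[u,u] \<ge> c\<parallel>u\<parallel>\<^sup>2\<close> on \<open>dom F\<close> for some \<open>c > 0\<close>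
  (\<open>\<ge>\<close> between complex numbers: the left side is real and not smaller).\<close>
definition form_pos_lower_bound :: "complex \<Rightarrow> ('b::complex_inner \<times> 'b) set \<Rightarrow> bool" where
  "form_pos_lower_bound z F \<longleftrightarrow> (\<exists>c>0. \<forall>u \<in> Domain F.
      Im (form_t z F u u) = 0 \<and> Re (form_t z F u u) \<ge> c * (norm u)\<^sup>2)"

end

theory Submission
  imports Defs
begin

text \<open>The main transform \<open>{((f, h), (f', -h'))}\<close> of a unitary boundary triple is a
  selfadjoint relation in \<open>\<h> \<oplus> \<HH>\<close>, so for non-real \<open>\<mu>\<close> every pair \<open>(w, y)\<close> has the form
  \<open>(f' - \<mu> f, -\<Gamma>\<^sub>1 f - \<mu> \<Gamma>\<^sub>0 f)\<close> with \<open>f \<in> A\<^sub>*\<close>. On \<open>\<N>\<^sub>\<mu>(A\<^sub>*)\<close> Green's identity gives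
  \<open>|Im \<mu>| \<parallel>f\<parallel>\<^sup>2 \<le> \<parallel>\<Gamma>\<^sub>1 f\<parallel> \<parallel>\<Gamma>\<^sub>0 f\<parallel>\<close>. So if \<open>\<Gamma>\<^sub>1\<close> is bounded on \<open>\<N>\<^sub>\<mu>\<close>, then \<open>\<Gamma>\<^sub>0\<close> is bounded
  below there, \<open>\<Gamma>\<^sub>0(\<N>\<^sub>\<mu>)\<close> is closed, and by the surjectivity above it is dense, hence equal to
  \<open>\<HH>\<close>; a duality argument transfers the bounds to \<open>\<N>\<^bsub>cnj \<mu>\<^esub>\<close>. Then
  \<open>A\<^sub>* = A\<^sub>0 + \<N>\<^sub>\<mu>(A\<^sub>*)\<close> with \<open>A\<^sub>0 - \<mu>\<close> and \<open>A\<^sub>0 - cnj \<mu>\<close> surjective, which makes \<open>A\<^sub>0\<close>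
  selfadjoint and \<open>\<Gamma>\<^sub>1\<close> bounded on \<open>A\<^sub>*\<close>. Finally, the form of \<open>-M(z)\<^sup>-\<^sup>1\<close> at \<open>\<Gamma>\<^sub>1 f\<close>,
  \<open>f \<in> \<N>\<^sub>z(A\<^sub>*)\<close>, equals \<open>\<parallel>f\<parallel>\<^sup>2\<close>, so its positive lower bound is the same as boundedness of
  \<open>\<Gamma>\<^sub>1\<close> on \<open>\<N>\<^sub>z\<close>.\<close>

section \<open>Complex inner product spaces\<close>

lemma cinner_zero_left [simp]: "cinner 0 y = 0" for y :: "'a::complex_inner"
  using cinner_add_left[of 0 0 y] by simp

lemma cinner_zero_right [simp]: "cinner x 0 = 0" for x :: "'a::complex_inner"
  using cinner_commute[of x 0] by simp

lemma cinner_add_right: "cinner x (y + z) = cinner x y + cinner x z" for x :: "'a::complex_inner"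
  by (metis cinner_add_left cinner_commute complex_cnj_add)

lemma cinner_scaleC_right: "cinner x (scaleC r y) = cnj r * cinner x y" for x :: "'a::complex_inner"
  by (metis cinner_commute cinner_scaleC_left complex_cnj_mult)

lemma cinner_minus_left: "cinner (- x) y = - cinner x y" for x :: "'a::complex_inner"
  using cinner_add_left[of x "- x" y] by (simp add: add_eq_0_iff)

lemma cinner_minus_right: "cinner x (- y) = - cinner x y" for x :: "'a::complex_inner"
  using cinner_add_right[of x y "- y"] by (simp add: add_eq_0_iff)

lemma cinner_diff_left: "cinner (x - y) z = cinner x z - cinner y z" for x :: "'a::complex_inner"
  using cinner_add_left[of x "- y" z] by (simp add: cinner_minus_left)

lemma cinner_diff_right: "cinner x (y - z) = cinner x y - cinner x z" for x :: "'a::complex_inner"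
  using cinner_add_right[of x y "- z"] by (simp add: cinner_minus_right)

lemma cinner_scaleR_left: "cinner (scaleR r x) y = of_real r * cinner x y" for x :: "'a::complex_inner"
  by (simp add: scaleR_scaleC cinner_scaleC_left)

lemma cinner_scaleR_right: "cinner x (scaleR r y) = of_real r * cinner x y" for x :: "'a::complex_inner"
  by (simp add: scaleR_scaleC cinner_scaleC_right)

lemma power2_norm_eq_cinner: "(norm x)\<^sup>2 = Re (cinner x x)" for x :: "'a::complex_inner"
  using norm_eq_sqrt_cinner[of x] cinner_ge_zero[of x] by simp

lemma Im_cinner_self [simp]: "Im (cinner x x) = 0" for x :: "'a::complex_inner"
  using arg_cong[OF cinner_commute[of x x], of Im] by simp

lemma cinner_self: "cinner x x = of_real ((norm x)\<^sup>2)" for x :: "'a::complex_inner"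
  by (simp add: complex_eq_iff power2_norm_eq_cinner)

lemma scaleC_zero_right [simp]: "scaleC c (0::'a::complex_vector) = 0"
  using scaleC_add_right[of c 0 0] by simp

lemma scaleC_zero_left [simp]: "scaleC 0 x = (0::'a::complex_vector)"
  using scaleR_scaleC[of 0 x] by simp

lemma scaleC_minus_right: "scaleC c (- x) = - scaleC c x" for x :: "'a::complex_vector"
  using scaleC_add_right[of c x "- x"] by (simp add: add_eq_0_iff)

lemma scaleC_diff_right: "scaleC c (x - y) = scaleC c x - scaleC c y" for x :: "'a::complex_vector"
  using scaleC_add_right[of c x "- y"] by (simp add: scaleC_minus_right)

lemma scaleC_minus1_left: "scaleC (- 1) x = - x" for x :: "'a::complex_vector"
  using scaleR_scaleC[of "- 1" x] by simp

lemma power2_norm_add: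
  "(norm (x + y))\<^sup>2 = (norm x)\<^sup>2 + (norm y)\<^sup>2 + 2 * Re (cinner x y)" for x :: "'a::complex_inner"
  using cinner_commute[of y x] by (simp add: power2_norm_eq_cinner cinner_add_left cinner_add_right)

lemma power2_norm_diff:
  "(norm (x - y))\<^sup>2 = (norm x)\<^sup>2 + (norm y)\<^sup>2 - 2 * Re (cinner x y)" for x :: "'a::complex_inner"
  using cinner_commute[of y x] by (simp add: power2_norm_eq_cinner cinner_diff_left cinner_diff_right)

lemma parallelogram_law:
  "(norm (x - y))\<^sup>2 + (norm (x + y))\<^sup>2 = 2 * (norm x)\<^sup>2 + 2 * (norm y)\<^sup>2" for x :: "'a::complex_inner"
  by (simp add: power2_norm_add power2_norm_diff)

lemma norm_scaleC: "norm (scaleC c x) = cmod c * norm x" for x :: "'a::complex_inner"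
proof -
  have "cinner (scaleC c x) (scaleC c x) = (c * cnj c) * cinner x x"
    by (simp add: cinner_scaleC_left cinner_scaleC_right)
  also have "\<dots> = of_real ((cmod c * norm x)\<^sup>2)"
    by (simp only: complex_norm_square[symmetric] cinner_self of_real_mult power_mult_distrib)
  finally have "(norm (scaleC c x))\<^sup>2 = (cmod c * norm x)\<^sup>2"
    by (simp only: power2_norm_eq_cinner Re_complex_of_real)
  then show ?thesis by (rule power2_eq_imp_eq) auto
qed

lemma Re_cinner_le: "Re (cinner x y) \<le> norm x * norm y" for x :: "'a::complex_inner"
proof (cases "y = 0")
  case False
  then have ny: "norm y > 0" by simp
  define t where "t = Re (cinner x y) / (norm y)\<^sup>2"
  have "0 \<le> (norm (x - scaleR t y))\<^sup>2" by simp
  also have "\<dots> = (norm x)\<^sup>2 + t\<^sup>2 * (norm y)\<^sup>2 - 2 * t * Re (cinner x y)"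
    by (simp add: power2_norm_diff cinner_scaleR_right power_mult_distrib)
  also have "\<dots> = (norm x)\<^sup>2 - (Re (cinner x y))\<^sup>2 / (norm y)\<^sup>2"
    using ny by (simp add: t_def field_simps power2_eq_square)
  finally have "(Re (cinner x y))\<^sup>2 \<le> (norm x * norm y)\<^sup>2"
    using ny by (simp add: field_simps power_mult_distrib)
  then show ?thesis by (rule power2_le_imp_le) simp
qed simp

lemma cinner_Cauchy_Schwarz: "cmod (cinner x y) \<le> norm x * norm y" for x :: "'a::complex_inner"
proof (cases "cinner x y = 0")
  case False
  define c where "c = cnj (cinner x y) / cmod (cinner x y)"
  have "cinner (scaleC c x) y = (cinner x y * cnj (cinner x y)) / of_real (cmod (cinner x y))"
    by (simp add: c_def cinner_scaleC_left)
  also have "\<dots> = of_real ((cmod (cinner x y))\<^sup>2 / cmod (cinner x y))"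
    by (simp only: mult.commute[of "cinner x y"] complex_norm_square[symmetric] of_real_divide)
  finally have "cinner (scaleC c x) y = of_real ((cmod (cinner x y))\<^sup>2 / cmod (cinner x y))" .
  then have "cmod (cinner x y) = Re (cinner (scaleC c x) y)"
    using False by (simp add: power2_eq_square)
  also have "\<dots> \<le> norm x * norm y"
    using Re_cinner_le[of "scaleC c x" y] False by (simp add: norm_scaleC c_def norm_divide)
  finally show ?thesis .
qed simp

lemma bounded_bilinear_cinner: "bounded_bilinear (cinner :: 'a::complex_inner \<Rightarrow> 'a \<Rightarrow> complex)"
proof
  fix a a' b b' :: 'a and r :: real
  show "cinner (a + a') b = cinner a b + cinner a' b" by (rule cinner_add_left)
  show "cinner a (b + b') = cinner a b + cinner a b'" by (rule cinner_add_right)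
  show "cinner (scaleR r a) b = scaleR r (cinner a b)"
    by (simp add: cinner_scaleR_left scaleR_conv_of_real)
  show "cinner a (scaleR r b) = scaleR r (cinner a b)"
    by (simp add: cinner_scaleR_right scaleR_conv_of_real)
  show "\<exists>K. \<forall>a b::'a. norm (cinner a b) \<le> norm a * norm b * K"
    by (rule exI[of _ 1]) (simp add: cinner_Cauchy_Schwarz)
qed

lemmas continuous_on_cinner [continuous_intros] =
  bounded_bilinear.continuous_on[OF bounded_bilinear_cinner]

lemma bounded_linear_scaleC: "bounded_linear (scaleC c :: 'a::complex_inner \<Rightarrow> 'a)"
proof
  fix x y :: 'a and r :: real
  show "scaleC c (x + y) = scaleC c x + scaleC c y" by (rule scaleC_add_right)
  show "scaleC c (scaleR r x) = scaleR r (scaleC c x)"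
    by (simp add: scaleR_scaleC scaleC_scaleC mult.commute)
  show "\<exists>K. \<forall>x::'a. norm (scaleC c x) \<le> norm x * K"
    by (intro exI[of _ "cmod c"]) (simp add: norm_scaleC mult.commute)
qed

lemmas continuous_on_scaleC [continuous_intros] =
  bounded_linear.continuous_on[OF bounded_linear_scaleC]

instantiation prod :: (complex_inner, complex_inner) complex_inner
begin

definition cinner_prod_def: "cinner x y = cinner (fst x) (fst y) + cinner (snd x) (snd y)"

instance
proof
  fix x y z :: "'a \<times> 'b" and r :: complex
  show "cinner x y = cnj (cinner y x)"
    using cinner_commute[of "fst x" "fst y"] cinner_commute[of "snd x" "snd y"]
    by (simp add: cinner_prod_def)
  show "cinner (x + y) z = cinner x z + cinner y z"
    by (simp add: cinner_prod_def cinner_add_left)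
  show "cinner (scaleC r x) y = r * cinner x y"
    by (simp add: cinner_prod_def scaleC_prod_def cinner_scaleC_left distrib_left)
  show "0 \<le> Re (cinner x x)"
    by (simp add: cinner_prod_def cinner_ge_zero)
  show "norm x = sqrt (Re (cinner x x))"
    by (simp add: cinner_prod_def norm_prod_def power2_norm_eq_cinner)
  show "cinner x x = 0 \<longleftrightarrow> x = 0"
  proof
    assume "cinner x x = 0"
    then have "(norm (fst x))\<^sup>2 + (norm (snd x))\<^sup>2 = 0"
      unfolding cinner_prod_def cinner_self by (metis of_real_add of_real_eq_0_iff)
    then show "x = 0" by (simp add: add_nonneg_eq_0_iff prod_eq_iff)
  qed (simp add: cinner_prod_def)
qed

end

instance prod :: (chilbert, chilbert) chilbert ..

lemma cinner_Pair: "cinner (a, b) (c, d) = cinner a c + cinner b d"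
  by (simp add: cinner_prod_def)

lemma scaleC_Pair: "scaleC r (a, b) = (scaleC r a, scaleC r b)"
  by (simp add: scaleC_prod_def)

section \<open>Subspaces and the projection theorem\<close>

lemma csubspace_0: "csubspace S \<Longrightarrow> 0 \<in> S"
  by (simp add: csubspace_def)

lemma csubspace_add: "csubspace S \<Longrightarrow> x \<in> S \<Longrightarrow> y \<in> S \<Longrightarrow> x + y \<in> S"
  by (simp add: csubspace_def)

lemma csubspace_scaleC: "csubspace S \<Longrightarrow> x \<in> S \<Longrightarrow> scaleC c x \<in> S"
  by (simp add: csubspace_def)

lemma csubspace_diff: "csubspace S \<Longrightarrow> x \<in> S \<Longrightarrow> y \<in> S \<Longrightarrow> x - y \<in> S"
  using csubspace_add[of S x "- y"] csubspace_scaleC[of S y "- 1"] by (simp add: scaleC_minus1_left)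

lemma csubspace_Int: "csubspace S \<Longrightarrow> csubspace T \<Longrightarrow> csubspace (S \<inter> T)"
  by (simp add: csubspace_def)

lemma csubspace_imp_subspace: "csubspace S \<Longrightarrow> subspace S"
  by (simp add: csubspace_def subspace_def scaleR_scaleC)

lemma csubspace_linear_image:
  assumes "csubspace S"
    and "\<And>x y. L (x + y) = L x + L y" and "\<And>c x. L (scaleC c x) = scaleC c (L x)"
  shows "csubspace (L ` S)"
  unfolding csubspace_def
proof (intro conjI ballI allI)
  show "0 \<in> L ` S" using assms(3)[of 0 0] csubspace_0[OF assms(1)] by (simp add: rev_image_eqI)
next
  fix a b assume "a \<in> L ` S" "b \<in> L ` S"
  then obtain x y where "x \<in> S" "y \<in> S" "a = L x" "b = L y" by blast
  then show "a + b \<in> L ` S" using assms(1,2) by (metis csubspace_add rev_image_eqI)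
next
  fix c a assume "a \<in> L ` S"
  then obtain x where "x \<in> S" "a = L x" by blast
  then show "scaleC c a \<in> L ` S" using assms(1,3) by (metis csubspace_scaleC rev_image_eqI)
qed

lemma le_mult_if_power2_le:
  fixes a b c :: real
  assumes "0 \<le> a" "0 \<le> b" "a\<^sup>2 \<le> c * b\<^sup>2"
  shows "a \<le> (\<bar>c\<bar> + 1) * b"
proof (rule power2_le_imp_le)
  have "c * b\<^sup>2 \<le> (\<bar>c\<bar> + 1) * b\<^sup>2" by (intro mult_right_mono) auto
  also have "\<dots> \<le> (\<bar>c\<bar> + 1)\<^sup>2 * b\<^sup>2"
    using mult_left_mono[of 1 "\<bar>c\<bar> + 1" "\<bar>c\<bar> + 1"]
    by (intro mult_right_mono) (auto simp: power2_eq_square)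
  finally show "a\<^sup>2 \<le> ((\<bar>c\<bar> + 1) * b)\<^sup>2" using assms(3) by (simp add: power_mult_distrib)
qed (use assms(2) in simp)

lemma le_if_mult_self_le: "(x::real) * x \<le> x * c \<Longrightarrow> 0 \<le> x \<Longrightarrow> 0 \<le> c \<Longrightarrow> x \<le> c"
  by (cases "x = 0") auto

lemma Cauchy_if_power2_norm_diff_le:
  fixes s :: "nat \<Rightarrow> 'a::real_normed_vector"
  assumes eps: "\<epsilon> \<longlonglongrightarrow> 0" and le: "\<And>m n. (norm (s m - s n))\<^sup>2 \<le> \<epsilon> m + \<epsilon> n"
  shows "Cauchy s"
proof (rule CauchyI)
  fix e :: real assume "0 < e"
  then have "eventually (\<lambda>n. \<epsilon> n < e\<^sup>2 / 2) sequentially"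
    by (intro order_tendstoD(2)[OF eps]) simp
  then obtain M where M: "\<And>n. M \<le> n \<Longrightarrow> \<epsilon> n < e\<^sup>2 / 2"
    by (auto simp: eventually_sequentially)
  show "\<exists>M. \<forall>m\<ge>M. \<forall>n\<ge>M. norm (s m - s n) < e"
  proof (intro exI allI impI)
    fix m n assume "M \<le> m" "M \<le> n"
    then have "(norm (s m - s n))\<^sup>2 < e\<^sup>2" using le[of m n] M[of m] M[of n] by linarith
    then show "norm (s m - s n) < e" using \<open>0 < e\<close> by (simp add: power_less_imp_less_base)
  qed
qed

lemma nearest_point_exists:
  fixes S :: "'a::chilbert set"
  assumes sub: "csubspace S" and cl: "closed S"
  obtains s0 where "s0 \<in> S" "\<And>s. s \<in> S \<Longrightarrow> norm (x - s0) \<le> norm (x - s)"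
proof -
  define d where "d = infdist x S"
  have dle: "d \<le> norm (x - s)" if "s \<in> S" for s
    using infdist_le[OF that, of x] by (simp add: d_def dist_norm)
  have "\<exists>s\<in>S. norm (x - s) < d + 1 / Suc n" for n
  proof -
    have ne: "S \<noteq> {}" using csubspace_0[OF sub] by blast
    then have "(INF s\<in>S. dist x s) < d + 1 / Suc n" by (simp add: d_def infdist_notempty)
    then show ?thesis
      using ne by (subst (asm) cINF_less_iff) (auto simp: dist_norm intro: bdd_belowI[of _ 0])
  qed
  then obtain s where sS: "\<And>n. s n \<in> S" and s: "\<And>n. norm (x - s n) < d + 1 / Suc n"
    by metis
  define \<epsilon> where "\<epsilon> n = 2 * ((d + 1 / Suc n)\<^sup>2 - d\<^sup>2)" for n
  have "Cauchy s"
  proof (rule Cauchy_if_power2_norm_diff_le)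
    have "\<epsilon> \<longlonglongrightarrow> 2 * ((d + 0)\<^sup>2 - d\<^sup>2)"
      unfolding \<epsilon>_def
      by (intro tendsto_intros LIMSEQ_inverse_real_of_nat[unfolded inverse_eq_divide])
    then show "\<epsilon> \<longlonglongrightarrow> 0" by simp
    fix m n
    have sq: "(norm (x - s k))\<^sup>2 \<le> (d + 1 / Suc k)\<^sup>2" for k
      using s[of k] by (intro power_mono) auto
    have mid: "scaleR (1/2) (s m + s n) \<in> S"
      using sS sub by (intro csubspace_add csubspace_imp_subspace[THEN subspace_scale]) auto
    have "(x - s m) + (x - s n) = scaleR 2 (x - scaleR (1/2) (s m + s n))"
      by (simp add: algebra_simps scaleR_2)
    then have "2 * d \<le> norm ((x - s m) + (x - s n))" using dle[OF mid] by simp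
    then have "(2 * d)\<^sup>2 \<le> (norm ((x - s m) + (x - s n)))\<^sup>2"
      by (intro power_mono) (auto simp: d_def infdist_nonneg)
    moreover have "(2 * d)\<^sup>2 = 4 * d\<^sup>2" by (simp add: power_mult_distrib)
    moreover have "(norm (s m - s n))\<^sup>2
        = 2 * (norm (x - s m))\<^sup>2 + 2 * (norm (x - s n))\<^sup>2 - (norm ((x - s m) + (x - s n)))\<^sup>2"
      using parallelogram_law[of "x - s m" "x - s n"] by (simp add: norm_minus_commute)
    ultimately show "(norm (s m - s n))\<^sup>2 \<le> \<epsilon> m + \<epsilon> n"
      using sq[of m] sq[of n] unfolding \<epsilon>_def by argo
  qed
  then obtain s0 where s0: "s \<longlonglongrightarrow> s0" by (auto simp: Cauchy_convergent_iff convergent_def)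
  have "s0 \<in> S" using cl sS s0 unfolding closed_sequential_limits by blast
  moreover have "norm (x - s0) \<le> d + 0"
  proof (rule LIMSEQ_le)
    show "(\<lambda>n. norm (x - s n)) \<longlonglongrightarrow> norm (x - s0)" by (intro tendsto_intros s0)
    show "(\<lambda>n. d + 1 / Suc n) \<longlonglongrightarrow> d + 0"
      by (intro tendsto_intros LIMSEQ_inverse_real_of_nat[unfolded inverse_eq_divide])
  qed (use s less_imp_le in blast)
  ultimately show thesis using dle by (intro that) force+
qed

lemma nearest_point_orthogonal:
  fixes S :: "'a::complex_inner set"
  assumes sub: "csubspace S" and s0: "s0 \<in> S" and t: "t \<in> S"
    and nearest: "\<And>s. s \<in> S \<Longrightarrow> norm (x - s0) \<le> norm (x - s)"
  shows "cinner t (x - s0) = 0"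
proof -
  define v where "v = x - s0"
  define a where "a = cinner v t"
  define \<epsilon> :: real where "\<epsilon> = 1 / ((norm t)\<^sup>2 + 1)"
  have "0 < (norm t)\<^sup>2 + 1" by (simp add: add_nonneg_pos)
  then have \<epsilon>: "0 < \<epsilon>" "\<epsilon> * (norm t)\<^sup>2 < 1" by (simp_all add: \<epsilon>_def field_simps)
  define c where "c = of_real \<epsilon> * a"
  have "(norm v)\<^sup>2 \<le> (norm (v - scaleC c t))\<^sup>2"
    using nearest[of "s0 + scaleC c t"] s0 t sub
    by (intro power_mono) (auto simp: v_def diff_diff_eq intro: csubspace_add csubspace_scaleC)
  also have "\<dots> = (norm v)\<^sup>2 + \<epsilon>\<^sup>2 * (cmod a)\<^sup>2 * (norm t)\<^sup>2 - 2 * \<epsilon> * (cmod a)\<^sup>2"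
  proof -
    have "a * cnj a = (of_real (cmod a))\<^sup>2"
      using complex_norm_square[of a] by (simp only: of_real_power)
    then have "cinner v (scaleC c t) = of_real (\<epsilon> * (cmod a)\<^sup>2)"
      by (simp add: cinner_scaleC_right c_def a_def[symmetric] mult.commute)
    then show ?thesis
      by (simp add: power2_norm_diff norm_scaleC c_def norm_mult power_mult_distrib)
  qed
  finally have "2 * \<epsilon> * (cmod a)\<^sup>2 \<le> \<epsilon> * (cmod a)\<^sup>2 * (\<epsilon> * (norm t)\<^sup>2)"
    by (simp add: power2_eq_square algebra_simps)
  also have "\<dots> \<le> \<epsilon> * (cmod a)\<^sup>2 * 1"
    using \<epsilon> by (intro mult_left_mono) auto
  finally have "a = 0" using \<epsilon> by (simp add: field_simps)
  then show ?thesis using cinner_commute[of t v] by (simp add: a_def v_def)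
qed

lemma closed_csubspace_eq_UNIV:
  fixes S :: "'a::chilbert set"
  assumes sub: "csubspace S" and cl: "closed S"
    and orth: "\<And>v. (\<forall>s\<in>S. cinner s v = 0) \<Longrightarrow> v = 0"
  shows "S = UNIV"
proof -
  have "x \<in> S" for x
  proof -
    obtain s0 where "s0 \<in> S" "\<And>s. s \<in> S \<Longrightarrow> norm (x - s0) \<le> norm (x - s)"
      using nearest_point_exists[OF sub cl] by blast
    then have "x - s0 = 0" using nearest_point_orthogonal[OF sub] orth by blast
    then show ?thesis using \<open>s0 \<in> S\<close> by simp
  qed
  then show ?thesis by blast
qed

lemma closed_image_if_bounded_below:
  fixes S :: "'a::chilbert set"
  assumes "csubspace S" "closed S" "bounded_linear L" "\<And>x. x \<in> S \<Longrightarrow> norm x \<le> K * norm (L x)"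
  shows "closed (L ` S)"
proof -
  have "(1 / (\<bar>K\<bar> + 1)) * norm x \<le> norm (L x)" if "x \<in> S" for x
  proof -
    have "norm x \<le> (\<bar>K\<bar> + 1) * norm (L x)"
      using assms(4)[OF that] by (smt (verit) mult_right_mono norm_ge_zero)
    then show ?thesis by (simp add: field_simps add_pos_nonneg)
  qed
  then have "complete (L ` S)"
    using assms(1-3) by (intro complete_isometric_image[of "1 / (\<bar>K\<bar> + 1)"] csubspace_imp_subspace)
      (auto simp: complete_eq_closed add_pos_nonneg)
  then show ?thesis by (rule complete_imp_closed)
qed

section \<open>Selfadjoint relations\<close>

lemma closed_adjoint_rel: "closed (adjoint_rel T)" for T :: "('a::complex_inner \<times> 'a) set"
proof -
  have "adjoint_rel T = (\<Inter>p\<in>T. {q. cinner (snd p) (fst q) = cinner (fst p) (snd q)})"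
    unfolding adjoint_rel_def by fastforce
  then show ?thesis by (simp add: closed_INT closed_Collect_eq continuous_intros)
qed

lemma abs_Im_mult_norm_le:
  fixes x x' :: "'a::complex_inner"
  assumes sym: "cinner x' x = cinner x x'"
  shows "\<bar>Im \<mu>\<bar> * norm x \<le> norm (x' - scaleC \<mu> x)"
proof (cases "x = 0")
  case False
  have "Im (cinner x' x) = 0" using arg_cong[OF sym, of Im] cinner_commute[of x x'] by simp
  then have "Im (cinner (x' - scaleC \<mu> x) x) = - Im \<mu> * (norm x)\<^sup>2"
    by (simp add: cinner_diff_left cinner_scaleC_left cinner_self)
  then have "\<bar>Im \<mu>\<bar> * (norm x)\<^sup>2 = \<bar>Im (cinner (x' - scaleC \<mu> x) x)\<bar>" by (simp add: abs_mult)
  also have "\<dots> \<le> norm (x' - scaleC \<mu> x) * norm x"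
    using abs_Im_le_cmod cinner_Cauchy_Schwarz order_trans by blast
  finally show ?thesis using False by (simp add: power2_eq_square)
qed simp

lemma norm_Pair_le_norm_diff_scaleC:
  fixes x x' :: "'a::complex_inner"
  assumes "Im \<mu> \<noteq> 0" and "\<bar>Im \<mu>\<bar> * norm x \<le> norm (x' - scaleC \<mu> x)"
  shows "norm (x, x') \<le> (1 + (1 + cmod \<mu>) / \<bar>Im \<mu>\<bar>) * norm (x' - scaleC \<mu> x)"
proof -
  define w where "w = x' - scaleC \<mu> x"
  have "norm x' \<le> norm w + cmod \<mu> * norm x"
    by (metis w_def diff_add_cancel norm_scaleC norm_triangle_ineq)
  then have "norm (x, x') \<le> norm w + (1 + cmod \<mu>) * norm x"
    using norm_Pair_le[of x x'] by (simp add: algebra_simps)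
  also have "\<dots> \<le> norm w + (1 + cmod \<mu>) * (norm w / \<bar>Im \<mu>\<bar>)"
    using assms by (intro add_left_mono mult_left_mono) (auto simp: w_def field_simps)
  finally show ?thesis by (simp add: w_def algebra_simps)
qed

text \<open>\<open>ran (T - \<mu>)\<close> is closed because \<open>T - \<mu>\<close> is bounded below, and its orthogonal
  complement \<open>ker (T - cnj \<mu>)\<close> is trivial.\<close>

lemma selfadjoint_rel_minus_scaleC_surj:
  fixes T :: "('a::chilbert \<times> 'a) set"
  assumes sub: "csubspace T" and sa: "selfadjoint_rel T" and im: "Im \<mu> \<noteq> 0"
  obtains x x' where "(x, x') \<in> T" "x' - scaleC \<mu> x = w"
proof -
  have sym: "cinner x' y = cinner x y'" if "(x, x') \<in> T" "(y, y') \<in> T" for x x' y y'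
    using that sa unfolding selfadjoint_rel_def adjoint_rel_def by blast
  define L where "L p = snd p - scaleC \<mu> (fst p)" for p :: "'a \<times> 'a"
  have "closed (L ` T)"
  proof (rule closed_image_if_bounded_below[OF sub])
    show "closed T" using sa closed_adjoint_rel unfolding selfadjoint_rel_def by metis
    show "bounded_linear L"
      unfolding L_def[abs_def]
      by (intro bounded_linear_sub bounded_linear_snd
          bounded_linear_compose[OF bounded_linear_scaleC bounded_linear_fst])
    show "norm p \<le> (1 + (1 + cmod \<mu>) / \<bar>Im \<mu>\<bar>) * norm (L p)" if "p \<in> T" for p
    proof -
      have "cinner (snd p) (fst p) = cinner (fst p) (snd p)" using sym that by simp
      from norm_Pair_le_norm_diff_scaleC[OF im abs_Im_mult_norm_le[OF this]]
      show ?thesis by (simp add: L_def)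
    qed
  qed
  moreover have "csubspace (L ` T)"
    using sub by (rule csubspace_linear_image)
      (auto simp: L_def scaleC_add_right scaleC_diff_right scaleC_scaleC mult.commute scaleC_prod_def)
  moreover have "v = 0" if orth: "\<forall>s\<in>L ` T. cinner s v = 0" for v
  proof -
    have "(v, scaleC (cnj \<mu>) v) \<in> adjoint_rel T"
      using orth by (auto simp: adjoint_rel_def L_def cinner_diff_left cinner_scaleC_left
          cinner_scaleC_right)
    then have vT: "(v, scaleC (cnj \<mu>) v) \<in> T" using sa by (simp add: selfadjoint_rel_def)
    have "(cnj \<mu> - \<mu>) * cinner v v = 0"
      using sym[OF vT vT] by (simp add: cinner_scaleC_left cinner_scaleC_right algebra_simps)
    moreover have "cnj \<mu> - \<mu> \<noteq> 0" using im by (simp add: complex_eq_iff)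
    ultimately show "v = 0" by (simp add: cinner_eq_zero_iff)
  qed
  ultimately have "L ` T = UNIV" by (intro closed_csubspace_eq_UNIV) auto
  then obtain p where "p \<in> T" "w = L p" by (metis UNIV_I imageE)
  then show thesis using that[of "fst p" "snd p"] by (simp add: L_def)
qed

section \<open>Boundary triples\<close>

text \<open>The main transform of \<open>\<Gamma>\<close>: it turns Green's identity into symmetry in \<open>\<h> \<oplus> \<HH>\<close>, and
  unitarity of \<open>\<Gamma>\<close> into selfadjointness.\<close>

definition main_transform ::
  "(('a \<times> 'a) \<times> ('b::uminus \<times> 'b)) set \<Rightarrow> (('a \<times> 'b) \<times> ('a \<times> 'b)) set" where
  "main_transform G = {((f, h), (f', - h')) | f f' h h'. ((f, f'), (h, h')) \<in> G}"

lemma csubspace_main_transform: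
  fixes G :: "(('a::complex_vector \<times> 'a) \<times> ('b::complex_vector \<times> 'b)) set"
  assumes "csubspace G"
  shows "csubspace (main_transform G)"
proof -
  have "main_transform G = (\<lambda>((f, f'), (h, h')). ((f, h), (f', - h'))) ` G"
    unfolding main_transform_def by force
  then show ?thesis
    using assms by (auto intro!: csubspace_linear_image simp: scaleC_prod_def scaleC_minus_right)
qed

lemma Gamma1_bounded_on_Nhat_iff:
  fixes G :: "(('a::complex_inner \<times> 'a) \<times> ('b::real_normed_vector \<times> 'b)) set"
  shows "Gamma1_bounded_on G (Nhat \<mu> G) \<longleftrightarrow>
    (\<exists>C. \<forall>f h h'. ((f, scaleC \<mu> f), (h, h')) \<in> G \<longrightarrow> norm h' \<le> C * norm f)"
proof
  assume "Gamma1_bounded_on G (Nhat \<mu> G)"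
  then obtain C where C: "\<And>x h h'. x \<in> Nhat \<mu> G \<Longrightarrow> (x, (h, h')) \<in> G \<Longrightarrow> norm h' \<le> C * norm x"
    unfolding Gamma1_bounded_on_def by blast
  have "norm h' \<le> (\<bar>C\<bar> * (1 + cmod \<mu>)) * norm f" if "((f, scaleC \<mu> f), (h, h')) \<in> G" for f h h'
  proof -
    have "norm h' \<le> \<bar>C\<bar> * norm (f, scaleC \<mu> f)"
      using C[of "(f, scaleC \<mu> f)"] that unfolding Nhat_def
      by (smt (verit, best) Domain.DomainI abs_ge_self mem_Collect_eq mult_right_mono norm_ge_zero)
    also have "\<dots> \<le> \<bar>C\<bar> * (norm f + cmod \<mu> * norm f)"
      using norm_Pair_le[of f "scaleC \<mu> f"] by (intro mult_left_mono) (auto simp: norm_scaleC)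
    finally show ?thesis by (simp add: algebra_simps)
  qed
  then show "\<exists>C. \<forall>f h h'. ((f, scaleC \<mu> f), (h, h')) \<in> G \<longrightarrow> norm h' \<le> C * norm f" by blast
next
  assume "\<exists>C. \<forall>f h h'. ((f, scaleC \<mu> f), (h, h')) \<in> G \<longrightarrow> norm h' \<le> C * norm f"
  then obtain C where C: "\<And>f h h'. ((f, scaleC \<mu> f), (h, h')) \<in> G \<Longrightarrow> norm h' \<le> C * norm f"
    by blast
  have "norm h' \<le> \<bar>C\<bar> * norm x" if xN: "x \<in> Nhat \<mu> G" and xG: "(x, (h, h')) \<in> G" for x h h'
  proof -
    obtain f where x: "x = (f, scaleC \<mu> f)" using xN unfolding Nhat_def by blast
    have "norm h' \<le> \<bar>C\<bar> * norm f"
      using C[of f h h'] xG x by (meson abs_ge_self mult_right_mono norm_ge_zero order_trans)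
    also have "\<dots> \<le> \<bar>C\<bar> * norm x" unfolding x by (intro mult_left_mono norm_fst_le) auto
    finally show ?thesis .
  qed
  then show "Gamma1_bounded_on G (Nhat \<mu> G)" unfolding Gamma1_bounded_on_def by blast
qed

lemma Nhat_subset_Domain: "Nhat z G \<subseteq> Domain G"
  unfolding Nhat_def by blast

lemma Gamma1_bounded_on_subset: "S \<subseteq> T \<Longrightarrow> Gamma1_bounded_on G T \<Longrightarrow> Gamma1_bounded_on G S"
  unfolding Gamma1_bounded_on_def by blast

lemma ess_selfadjoint_rel_if_selfadjoint_rel: "selfadjoint_rel T \<Longrightarrow> ess_selfadjoint_rel T"
  by (metis closed_adjoint_rel closure_closed ess_selfadjoint_rel_def selfadjoint_rel_def)

lemma Domain_neg_inv_weyl: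
  "u \<in> Domain (neg_inv (weyl G z)) \<longleftrightarrow> (\<exists>f h. ((f, scaleC z f), (h, u)) \<in> G)"
  unfolding neg_inv_def weyl_def by blast

locale unitary_boundary_triple =
  fixes A :: "('a::chilbert \<times> 'a) set"
    and G :: "(('a \<times> 'a) \<times> ('b::chilbert \<times> 'b)) set"
  assumes unitary: "unitary_bt A G"
begin

lemma csubspace_G: "csubspace G"
  using unitary by (simp add: unitary_bt_def linear_op_def)

lemma green:
  assumes "((f, f'), (h, h')) \<in> G" "((g, g'), (k, k')) \<in> G"
  shows "cinner f' g - cinner f g' = cinner h' k - cinner h k'"
proof -
  have "((k, k'), (g, g')) \<in> bdry_adj G"
    using assms(2) unitary unfolding unitary_bt_def by blast
  then show ?thesis using assms(1) unfolding bdry_adj_def by fastforce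
qed

lemma mem_G_if_green:
  assumes "\<And>f f' h h'. ((f, f'), (h, h')) \<in> G \<Longrightarrow> cinner f' g - cinner f g' = cinner h' k - cinner h k'"
  shows "((g, g'), (k, k')) \<in> G"
proof -
  have "((k, k'), (g, g')) \<in> bdry_adj G" unfolding bdry_adj_def using assms by auto
  then show ?thesis using unitary unfolding unitary_bt_def by blast
qed

lemma green_identity_G: "green_identity G"
  unfolding green_identity_def using green by fast

lemma G_zero_imp_zero: "((0, 0), (h, h')) \<in> G \<Longrightarrow> h = 0 \<and> h' = 0"
  using unitary csubspace_0[OF csubspace_G]
  unfolding unitary_bt_def linear_op_def single_valued_def by (force simp: zero_prod_def)

lemma G_diff:
  "((f, f'), (h, h')) \<in> G \<Longrightarrow> ((g, g'), (k, k')) \<in> G \<Longrightarrow> ((f - g, f' - g'), (h - k, h' - k')) \<in> G"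
  using csubspace_diff[OF csubspace_G, of "((f, f'), (h, h'))" "((g, g'), (k, k'))"] by simp

lemma closed_G: "closed G"
proof -
  have "G = (\<Inter>q\<in>G. {p. cinner (snd (fst q)) (fst (fst p)) - cinner (fst (fst q)) (snd (fst p))
                       = cinner (snd (snd q)) (fst (snd p)) - cinner (fst (snd q)) (snd (snd p))})"
    (is "G = ?R")
  proof
    show "G \<subseteq> ?R"
      using green by fastforce
    show "?R \<subseteq> G"
    proof
      fix p assume "p \<in> ?R"
      then show "p \<in> G"
        using mem_G_if_green[where g="fst (fst p)" and g'="snd (fst p)" and k="fst (snd p)"
            and k'="snd (snd p)"] by force
    qed
  qed
  moreover have "closed ?R"
    by (intro closed_INT ballI closed_Collect_eq continuous_intros)
  ultimately show ?thesis by simp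
qed

lemma selfadjoint_main_transform: "selfadjoint_rel (main_transform G)"
  unfolding selfadjoint_rel_def
proof (intro equalityI subsetI)
  fix p assume p: "p \<in> adjoint_rel (main_transform G)"
  obtain g k g' k' where pe: "p = ((g, k), (g', k'))" by (metis prod.collapse)
  have "((g, g'), (k, - k')) \<in> G"
  proof (rule mem_G_if_green)
    fix f f' h h' assume "((f, f'), (h, h')) \<in> G"
    then have "((f, h), (f', - h')) \<in> main_transform G" unfolding main_transform_def by blast
    then show "cinner f' g - cinner f g' = cinner h' k - cinner h (- k')"
      using p pe unfolding adjoint_rel_def
      by (force simp: cinner_Pair cinner_minus_left cinner_minus_right algebra_simps)
  qed
  then show "p \<in> main_transform G" unfolding main_transform_def pe by force
next
  fix p assume "p \<in> main_transform G"
  then obtain g g' k k' where pe: "p = ((g, k), (g', - k'))" and gG: "((g, g'), (k, k')) \<in> G"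
    unfolding main_transform_def by blast
  show "p \<in> adjoint_rel (main_transform G)"
    unfolding adjoint_rel_def main_transform_def pe
    using green[OF _ gG] by (force simp: cinner_Pair cinner_minus_left cinner_minus_right algebra_simps)
qed

lemma G_minus_scaleC_surj:
  assumes "Im \<mu> \<noteq> 0"
  obtains f f' h h' where "((f, f'), (h, h')) \<in> G" "f' - scaleC \<mu> f = w" "- h' - scaleC \<mu> h = y"
proof -
  obtain x x' where "(x, x') \<in> main_transform G" "x' - scaleC \<mu> x = (w, y)"
    using selfadjoint_rel_minus_scaleC_surj[OF csubspace_main_transform[OF csubspace_G]
        selfadjoint_main_transform assms] .
  then show thesis using that unfolding main_transform_def by (auto simp: scaleC_Pair)
qed

subsection \<open>Defect subspaces\<close>

lemma defect_green:
  "((f, scaleC \<mu> f), (h, h')) \<in> G \<Longrightarrow> (\<mu> - cnj \<mu>) * of_real ((norm f)\<^sup>2) = cinner h' h - cinner h h'"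
  using green[of f "scaleC \<mu> f" h h' f "scaleC \<mu> f" h h']
  by (simp add: cinner_scaleC_left cinner_scaleC_right cinner_self algebra_simps)

lemma defect_norm_bound:
  assumes "((f, scaleC \<mu> f), (h, h')) \<in> G"
  shows "\<bar>Im \<mu>\<bar> * (norm f)\<^sup>2 \<le> norm h' * norm h"
proof -
  have "Im ((\<mu> - cnj \<mu>) * of_real ((norm f)\<^sup>2)) = Im (cinner h' h - cnj (cinner h' h))"
    using defect_green[OF assms] cinner_commute[of h h'] by simp
  then have "Im \<mu> * (norm f)\<^sup>2 = Im (cinner h' h)" by simp
  then have "\<bar>Im \<mu>\<bar> * (norm f)\<^sup>2 = \<bar>Im (cinner h' h)\<bar>"
    by (metis abs_mult abs_of_nonneg zero_le_power2)
  also have "\<dots> \<le> norm h' * norm h"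
    using abs_Im_le_cmod cinner_Cauchy_Schwarz order_trans by blast
  finally show ?thesis .
qed

definition Gamma0_defect :: "complex \<Rightarrow> 'b set" where
  "Gamma0_defect \<mu> = {h. \<exists>f h'. ((f, scaleC \<mu> f), (h, h')) \<in> G}"

definition Gamma0_controls_defect :: "complex \<Rightarrow> real \<Rightarrow> bool" where
  "Gamma0_controls_defect \<mu> K \<longleftrightarrow> (\<forall>f h h'. ((f, scaleC \<mu> f), (h, h')) \<in> G \<longrightarrow>
      norm h' \<le> K * norm h \<and> norm f \<le> K * norm h)"

lemma Gamma0_defect_eq_image:
  "Gamma0_defect \<mu> = (\<lambda>p. fst (snd p)) ` (G \<inter> {p. snd (fst p) = scaleC \<mu> (fst (fst p))})"
  unfolding Gamma0_defect_def by (force simp: image_iff)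

lemma csubspace_defect_part: "csubspace (G \<inter> {p. snd (fst p) = scaleC \<mu> (fst (fst p))})"
proof (rule csubspace_Int[OF csubspace_G])
  show "csubspace {p :: ('a \<times> 'a) \<times> ('b \<times> 'b). snd (fst p) = scaleC \<mu> (fst (fst p))}"
    by (auto simp: csubspace_def scaleC_add_right scaleC_prod_def scaleC_scaleC mult.commute)
qed

lemma closed_defect_part: "closed (G \<inter> {p. snd (fst p) = scaleC \<mu> (fst (fst p))})"
  by (intro closed_Int closed_G closed_Collect_eq continuous_intros)

lemma csubspace_Gamma0_defect: "csubspace (Gamma0_defect \<mu>)"
  unfolding Gamma0_defect_eq_image using csubspace_defect_part
  by (rule csubspace_linear_image) (simp_all add: scaleC_prod_def)

lemma closed_Gamma0_defect:
  assumes "Gamma0_controls_defect \<mu> K"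
  shows "closed (Gamma0_defect \<mu>)"
  unfolding Gamma0_defect_eq_image
proof (rule closed_image_if_bounded_below[OF csubspace_defect_part closed_defect_part])
  show "bounded_linear (\<lambda>p::('a \<times> 'a) \<times> ('b \<times> 'b). fst (snd p))"
    by (intro bounded_linear_compose[OF bounded_linear_fst bounded_linear_snd])
  fix p assume "p \<in> G \<inter> {p. snd (fst p) = scaleC \<mu> (fst (fst p))}"
  then obtain f h h' where p: "p = ((f, scaleC \<mu> f), (h, h'))" and pG: "p \<in> G"
    by (metis (mono_tags, lifting) IntD1 IntD2 mem_Collect_eq prod.collapse)
  have "norm h' \<le> \<bar>K\<bar> * norm h" "norm f \<le> \<bar>K\<bar> * norm h"
    using assms pG unfolding p Gamma0_controls_defect_def
    by (meson abs_ge_self mult_right_mono norm_ge_zero order_trans)+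
  moreover have "cmod \<mu> * norm f \<le> cmod \<mu> * (\<bar>K\<bar> * norm h)"
    using \<open>norm f \<le> \<bar>K\<bar> * norm h\<close> by (simp add: mult_left_mono)
  ultimately have "norm f + norm (scaleC \<mu> f) + (norm h + norm h')
      \<le> (2 * \<bar>K\<bar> + cmod \<mu> * \<bar>K\<bar> + 1) * norm h"
    by (simp add: norm_scaleC algebra_simps)
  moreover have "norm p \<le> norm f + norm (scaleC \<mu> f) + (norm h + norm h')"
    unfolding p by (meson add_mono norm_Pair_le order_trans)
  ultimately show "norm p \<le> (2 * \<bar>K\<bar> + cmod \<mu> * \<bar>K\<bar> + 1) * norm (fst (snd p))"
    by (simp add: p)
qed

text \<open>A vector orthogonal to \<open>\<Gamma>\<^sub>0(\<N>\<^sub>\<mu>)\<close> is \<open>-\<Gamma>\<^sub>1 g - \<mu> \<Gamma>\<^sub>0 g\<close> for some \<open>g \<in> \<N>\<^bsub>cnj \<mu>\<^esub>\<close>;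
  Green's identity against all of \<open>\<N>\<^sub>\<mu>\<close> forces \<open>\<Gamma>\<^sub>0 g = 0\<close>, and then \<open>g = 0\<close>.\<close>

lemma Gamma0_defect_orthogonal_eq_0:
  assumes im: "Im \<mu> \<noteq> 0" and orth: "\<forall>h\<in>Gamma0_defect \<mu>. cinner h v = 0"
  shows "v = 0"
proof -
  have "Im (cnj \<mu>) \<noteq> 0" using im by simp
  then obtain g g' k k' where "((g, g'), (k, k')) \<in> G" "g' - scaleC (cnj \<mu>) g = 0"
    and v: "- k' - scaleC (cnj \<mu>) k = v"
    by (rule G_minus_scaleC_surj)
  then have gG: "((g, scaleC (cnj \<mu>) g), (k, k')) \<in> G" by simp
  have orth_k: "cinner (h' + scaleC \<mu> h) k = 0" if nG: "((n, scaleC \<mu> n), (h, h')) \<in> G" for n h h'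
  proof -
    have "cinner h' k = cinner h k'"
      using green[OF nG gG] by (simp add: cinner_scaleC_left cinner_scaleC_right)
    moreover have "cinner h v = 0" using nG orth unfolding Gamma0_defect_def by blast
    ultimately show ?thesis
      by (simp add: v[symmetric] cinner_add_left cinner_diff_right cinner_minus_right
          cinner_scaleC_left cinner_scaleC_right add_eq_0_iff)
  qed
  obtain n n' h h' where "((n, n'), (h, h')) \<in> G" "n' - scaleC \<mu> n = 0"
    and hk: "- h' - scaleC \<mu> h = - k"
    using im by (rule G_minus_scaleC_surj)
  then have "cinner (h' + scaleC \<mu> h) k = 0" by (intro orth_k) simp
  moreover have "- (h' + scaleC \<mu> h) = - k" using hk by simp
  ultimately have "cinner k k = 0" by (simp only: neg_equal_iff_equal)
  then have k0: "k = 0" by (simp add: cinner_eq_zero_iff)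
  have "(cnj \<mu> - \<mu>) * of_real ((norm g)\<^sup>2) = 0" using defect_green[OF gG] k0 by simp
  moreover have "cnj \<mu> - \<mu> \<noteq> 0" using im by (simp add: complex_eq_iff)
  ultimately have "g = 0" by simp
  then have "k' = 0" using G_zero_imp_zero gG k0 by simp
  then show "v = 0" using v k0 by simp
qed

lemma Gamma0_defect_eq_UNIV:
  assumes "Im \<mu> \<noteq> 0" and "Gamma0_controls_defect \<mu> K"
  shows "Gamma0_defect \<mu> = UNIV"
  using closed_csubspace_eq_UNIV[OF csubspace_Gamma0_defect closed_Gamma0_defect[OF assms(2)]]
    Gamma0_defect_orthogonal_eq_0[OF assms(1)] by blast

lemma Gamma0_controls_defect_if_Gamma1_bounded:
  assumes im: "Im \<mu> \<noteq> 0" and "Gamma1_bounded_on G (Nhat \<mu> G)"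
  obtains K where "Gamma0_controls_defect \<mu> K"
proof -
  obtain C0 where "\<And>f h h'. ((f, scaleC \<mu> f), (h, h')) \<in> G \<Longrightarrow> norm h' \<le> C0 * norm f"
    using assms(2) unfolding Gamma1_bounded_on_Nhat_iff by blast
  then obtain C where C0: "0 \<le> C"
    and C: "\<And>f h h'. ((f, scaleC \<mu> f), (h, h')) \<in> G \<Longrightarrow> norm h' \<le> C * norm f"
    by (meson abs_ge_self abs_ge_zero mult_right_mono norm_ge_zero order_trans)
  have f_le: "norm f \<le> (C / \<bar>Im \<mu>\<bar>) * norm h" if fG: "((f, scaleC \<mu> f), (h, h')) \<in> G" for f h h'
  proof -
    have "\<bar>Im \<mu>\<bar> * (norm f)\<^sup>2 \<le> norm h' * norm h" by (rule defect_norm_bound[OF fG])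
    also have "\<dots> \<le> C * norm f * norm h" using C[OF fG] by (intro mult_right_mono) auto
    finally have "norm f * norm f \<le> norm f * ((C / \<bar>Im \<mu>\<bar>) * norm h)"
      using im by (simp add: power2_eq_square field_simps)
    then show ?thesis by (rule le_if_mult_self_le) (use C0 in auto)
  qed
  define K where "K = max (C * (C / \<bar>Im \<mu>\<bar>)) (C / \<bar>Im \<mu>\<bar>)"
  have "Gamma0_controls_defect \<mu> K"
    unfolding Gamma0_controls_defect_def
  proof (intro allI impI conjI)
    fix f h h' assume fG: "((f, scaleC \<mu> f), (h, h')) \<in> G"
    have "norm h' \<le> C * norm f" by (rule C[OF fG])
    also have "\<dots> \<le> C * ((C / \<bar>Im \<mu>\<bar>) * norm h)"
      using f_le[OF fG] C0 by (rule mult_left_mono)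
    also have "\<dots> \<le> K * norm h" unfolding K_def mult.assoc[symmetric] by (intro mult_right_mono) auto
    finally show "norm h' \<le> K * norm h" .
    show "norm f \<le> K * norm h"
      using f_le[OF fG] mult_right_mono[OF max.cobounded2 norm_ge_zero] unfolding K_def
      by (rule order_trans)
  qed
  then show thesis by (rule that)
qed

text \<open>Write \<open>v = -k' - cnj \<mu> k\<close> as \<open>\<Gamma>\<^sub>0 n\<close> with \<open>n \<in> \<N>\<^sub>\<mu>\<close>; Green's identity for \<open>n\<close> and \<open>g\<close> gives
  \<open>\<parallel>v\<parallel>\<^sup>2 = \<langle>-\<Gamma>\<^sub>1 n - \<mu> v, k\<rangle>\<close>, so \<open>\<parallel>v\<parallel>\<close> and then \<open>\<parallel>k'\<parallel>\<close> are controlled by \<open>\<parallel>k\<parallel>\<close>.\<close>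

lemma Gamma1_le_Gamma0_defect_cnj:
  assumes control: "Gamma0_controls_defect \<mu> K" and onto: "Gamma0_defect \<mu> = UNIV"
    and gG: "((g, scaleC (cnj \<mu>) g), (k, k')) \<in> G"
  shows "norm k' \<le> (\<bar>K\<bar> + 2 * cmod \<mu>) * norm k"
proof -
  define v where "v = - k' - scaleC (cnj \<mu>) k"
  obtain n h' where nG: "((n, scaleC \<mu> n), (v, h')) \<in> G"
    using onto unfolding Gamma0_defect_def by blast
  have "cinner h' k = cinner v k'"
    using green[OF nG gG] by (simp add: cinner_scaleC_left cinner_scaleC_right)
  then have vv: "cinner v v = cinner (- h' - scaleC \<mu> v) k"
    by (simp add: v_def[symmetric] cinner_diff_left cinner_minus_left cinner_scaleC_left
        cinner_diff_right cinner_minus_right cinner_scaleC_right)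
      (simp add: v_def cinner_diff_right cinner_minus_right cinner_scaleC_right)
  have "norm h' \<le> \<bar>K\<bar> * norm v"
    using control nG unfolding Gamma0_controls_defect_def
    by (meson abs_ge_self mult_right_mono norm_ge_zero order_trans)
  then have "norm (- h' - scaleC \<mu> v) \<le> (\<bar>K\<bar> + cmod \<mu>) * norm v"
    using norm_triangle_ineq4[of "- h'" "scaleC \<mu> v"] by (simp add: norm_scaleC algebra_simps)
  then have "norm v * norm v \<le> norm v * ((\<bar>K\<bar> + cmod \<mu>) * norm k)"
    using Re_cinner_le[of "- h' - scaleC \<mu> v" k] vv power2_norm_eq_cinner[of v]
    by (smt (verit, best) mult.commute mult.left_commute mult_right_mono norm_ge_zero power2_eq_square)
  then have "norm v \<le> (\<bar>K\<bar> + cmod \<mu>) * norm k" by (rule le_if_mult_self_le) auto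
  moreover have "k' = - v - scaleC (cnj \<mu>) k" by (simp add: v_def)
  then have "norm k' \<le> norm v + cmod \<mu> * norm k"
    using norm_triangle_ineq4[of "- v" "scaleC (cnj \<mu>) k"] by (simp add: norm_scaleC)
  ultimately show ?thesis by (simp add: algebra_simps)
qed

lemma Gamma0_controls_defect_cnj:
  assumes im: "Im \<mu> \<noteq> 0" and "Gamma0_controls_defect \<mu> K" and "Gamma0_defect \<mu> = UNIV"
  obtains K' where "Gamma0_controls_defect (cnj \<mu>) K'"
proof -
  define K2 where "K2 = \<bar>K\<bar> + 2 * cmod \<mu>"
  define K' where "K' = max K2 (\<bar>K2 / \<bar>Im \<mu>\<bar>\<bar> + 1)"
  have "Gamma0_controls_defect (cnj \<mu>) K'"
    unfolding Gamma0_controls_defect_def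
  proof (intro allI impI conjI)
    fix g k k' assume gG: "((g, scaleC (cnj \<mu>) g), (k, k')) \<in> G"
    have k': "norm k' \<le> K2 * norm k" unfolding K2_def by (rule Gamma1_le_Gamma0_defect_cnj[OF assms(2,3) gG])
    then show "norm k' \<le> K' * norm k"
      unfolding K'_def by (smt (verit) max.cobounded1 mult_right_mono norm_ge_zero)
    have "\<bar>Im \<mu>\<bar> * (norm g)\<^sup>2 \<le> norm k' * norm k" using defect_norm_bound[OF gG] by simp
    also have "\<dots> \<le> K2 * norm k * norm k" using k' by (intro mult_right_mono) auto
    finally have "(norm g)\<^sup>2 \<le> (K2 / \<bar>Im \<mu>\<bar>) * (norm k)\<^sup>2"
      using im by (simp add: field_simps power2_eq_square)
    then have "norm g \<le> (\<bar>K2 / \<bar>Im \<mu>\<bar>\<bar> + 1) * norm k" by (intro le_mult_if_power2_le) auto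
    then show "norm g \<le> K' * norm k"
      unfolding K'_def by (smt (verit) max.cobounded2 mult_right_mono norm_ge_zero)
  qed
  then show thesis by (rule that)
qed

subsection \<open>The kernel of \<open>\<Gamma>\<^sub>0\<close>\<close>

lemma ker_Gamma0_symmetric:
  "((f, f'), (0, k)) \<in> G \<Longrightarrow> ((g, g'), (0, l)) \<in> G \<Longrightarrow> cinner f' g = cinner f g'"
  using green by fastforce

text \<open>\<open>A\<^sub>* = A\<^sub>0 + \<N>\<^sub>\<mu>(A\<^sub>*)\<close> once \<open>\<Gamma>\<^sub>0(\<N>\<^sub>\<mu>) = \<HH>\<close>: subtract from any \<open>f \<in> A\<^sub>*\<close> an element of
  \<open>\<N>\<^sub>\<mu>\<close> with the same \<open>\<Gamma>\<^sub>0\<close>.\<close>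

lemma ker_Gamma0_minus_scaleC_surj:
  assumes im: "Im \<mu> \<noteq> 0" and onto: "Gamma0_defect \<mu> = UNIV"
  obtains a a' k' where "((a, a'), (0, k')) \<in> G" "a' - scaleC \<mu> a = w"
proof -
  obtain f f' h h' where fG: "((f, f'), (h, h')) \<in> G" and fw: "f' - scaleC \<mu> f = w"
    using im by (rule G_minus_scaleC_surj)
  obtain n h'' where nG: "((n, scaleC \<mu> n), (h, h'')) \<in> G"
    using onto unfolding Gamma0_defect_def by blast
  have "((f - n, f' - scaleC \<mu> n), (0, h' - h'')) \<in> G" using G_diff[OF fG nG] by simp
  moreover have "(f' - scaleC \<mu> n) - scaleC \<mu> (f - n) = w"
    using fw by (simp add: scaleC_diff_right algebra_simps)
  ultimately show thesis by (rule that)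
qed

lemma selfadjoint_ker_Gamma0:
  assumes im: "Im \<mu> \<noteq> 0"
    and onto: "Gamma0_defect \<mu> = UNIV" and onto_cnj: "Gamma0_defect (cnj \<mu>) = UNIV"
  shows "selfadjoint_rel (ker_Gamma0 G)"
  unfolding selfadjoint_rel_def
proof (intro equalityI subsetI)
  fix x assume "x \<in> ker_Gamma0 G"
  then obtain k where xG: "(x, (0, k)) \<in> G" unfolding ker_Gamma0_def by blast
  obtain f f' where x: "x = (f, f')" by (cases x)
  note fG = xG[unfolded x]
  show "x \<in> adjoint_rel (ker_Gamma0 G)"
    unfolding adjoint_rel_def x
  proof clarify
    fix g g' assume "(g, g') \<in> ker_Gamma0 G"
    then obtain l where gG: "((g, g'), (0, l)) \<in> G" unfolding ker_Gamma0_def by blast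
    show "cinner g' f = cinner g f'" by (rule ker_Gamma0_symmetric[OF gG fG])
  qed
next
  fix x assume x: "x \<in> adjoint_rel (ker_Gamma0 G)"
  obtain g g' where xe: "x = (g, g')" by (metis prod.collapse)
  obtain a a' k' where aG: "((a, a'), (0, k')) \<in> G" and aw: "a' - scaleC \<mu> a = g' - scaleC \<mu> g"
    using im onto by (rule ker_Gamma0_minus_scaleC_surj)
  define d where "d = g - a"
  have dd: "g' - a' = scaleC \<mu> d"
    using aw by (simp add: d_def scaleC_diff_right algebra_simps)
  have orth: "cinner (f' - scaleC (cnj \<mu>) f) d = 0" if fG: "((f, f'), (0, k)) \<in> G" for f f' k
  proof -
    have "cinner f' g = cinner f g'"
      using x fG unfolding xe adjoint_rel_def ker_Gamma0_def by blast
    moreover have "cinner f' a = cinner f a'" by (rule ker_Gamma0_symmetric[OF fG aG])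
    ultimately have "cinner f' d = cinner f (g' - a')" by (simp add: d_def cinner_diff_right)
    then show ?thesis by (simp add: dd cinner_diff_left cinner_scaleC_left cinner_scaleC_right)
  qed
  have "Im (cnj \<mu>) \<noteq> 0" using im by simp
  then obtain f f' k where fG: "((f, f'), (0, k)) \<in> G" and fd: "f' - scaleC (cnj \<mu>) f = d"
    using onto_cnj by (rule ker_Gamma0_minus_scaleC_surj)
  have "cinner d d = 0" using orth[OF fG] unfolding fd .
  then have "d = 0" by (simp add: cinner_eq_zero_iff)
  then have "g = a" "g' = a'" using dd by (simp_all add: d_def)
  then show "x \<in> ker_Gamma0 G" unfolding ker_Gamma0_def xe using aG by blast
qed

text \<open>Green's identity for \<open>a \<in> A\<^sub>0\<close> and \<open>g \<in> \<N>\<^bsub>cnj \<mu>\<^esub>\<close> with \<open>\<Gamma>\<^sub>0 g = \<Gamma>\<^sub>1 a\<close>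
  reads \<open>\<parallel>\<Gamma>\<^sub>1 a\<parallel>\<^sup>2 = \<langle>a' - \<mu> a, g\<rangle>\<close>.\<close>

lemma ker_Gamma0_Gamma1_le:
  assumes control: "Gamma0_controls_defect (cnj \<mu>) K" and onto: "Gamma0_defect (cnj \<mu>) = UNIV"
    and aG: "((a, a'), (0, k')) \<in> G"
  shows "norm k' \<le> \<bar>K\<bar> * norm (a' - scaleC \<mu> a)"
proof -
  obtain g k'' where gG: "((g, scaleC (cnj \<mu>) g), (k', k'')) \<in> G"
    using onto unfolding Gamma0_defect_def by blast
  have g: "norm g \<le> \<bar>K\<bar> * norm k'"
    using control gG unfolding Gamma0_controls_defect_def
    by (meson abs_ge_self mult_right_mono norm_ge_zero order_trans)
  have "cinner (a' - scaleC \<mu> a) g = cinner k' k'"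
    using green[OF aG gG] by (simp add: cinner_diff_left cinner_scaleC_left cinner_scaleC_right)
  then have "norm k' * norm k' \<le> norm (a' - scaleC \<mu> a) * norm g"
    using Re_cinner_le[of "a' - scaleC \<mu> a" g] by (simp add: power2_norm_eq_cinner[symmetric] power2_eq_square)
  also have "\<dots> \<le> norm (a' - scaleC \<mu> a) * (\<bar>K\<bar> * norm k')"
    using g by (simp add: mult_left_mono)
  also have "\<dots> = norm k' * (\<bar>K\<bar> * norm (a' - scaleC \<mu> a))" by (simp add: algebra_simps)
  finally show ?thesis by (rule le_if_mult_self_le) auto
qed

lemma Gamma1_bounded_on_Domain:
  assumes im: "Im \<mu> \<noteq> 0" and bounded: "Gamma1_bounded_on G (Nhat \<mu> G)"
    and control_cnj: "Gamma0_controls_defect (cnj \<mu>) K"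
    and onto: "Gamma0_defect \<mu> = UNIV" and onto_cnj: "Gamma0_defect (cnj \<mu>) = UNIV"
  shows "Gamma1_bounded_on G (Domain G)"
proof -
  obtain C where C: "\<And>f h h'. ((f, scaleC \<mu> f), (h, h')) \<in> G \<Longrightarrow> norm h' \<le> C * norm f"
    using bounded unfolding Gamma1_bounded_on_Nhat_iff by blast
  define M where "M = 1 + cmod \<mu>"
  define Ca where "Ca = 1 + (1 + cmod \<mu>) / \<bar>Im \<mu>\<bar>"
  have Ca: "0 \<le> Ca" by (simp add: Ca_def)
  have "norm h' \<le> (\<bar>C\<bar> * (1 + Ca * M) + \<bar>K\<bar> * M) * norm x" if xG: "(x, (h, h')) \<in> G" for x h h'
  proof -
    obtain f f' where x: "x = (f, f')" by (cases x)
    note fG = xG[unfolded x]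
    define w where "w = f' - scaleC \<mu> f"
    have "norm w \<le> norm f' + cmod \<mu> * norm f"
      using norm_triangle_ineq4[of f' "scaleC \<mu> f"] by (simp add: w_def norm_scaleC)
    also have "\<dots> \<le> norm x + cmod \<mu> * norm x"
      using norm_fst_le[of f f'] norm_snd_le[of f' f] unfolding x by (intro add_mono mult_left_mono) auto
    finally have w: "norm w \<le> M * norm x" by (simp add: M_def algebra_simps)
    obtain a a' k' where aG: "((a, a'), (0, k')) \<in> G" and aw: "a' - scaleC \<mu> a = w"
      using im onto by (rule ker_Gamma0_minus_scaleC_surj)
    have "norm (a, a') \<le> Ca * norm w"
      using norm_Pair_le_norm_diff_scaleC[OF im abs_Im_mult_norm_le[OF ker_Gamma0_symmetric[OF aG aG]]]
      by (simp add: Ca_def aw)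
    then have "norm (a, a') \<le> Ca * (M * norm x)"
      using w Ca by (meson mult_left_mono order_trans)
    moreover have "norm (f - a) \<le> norm x + norm (a, a')"
      using norm_triangle_ineq4[of f a] norm_fst_le[of f f'] norm_fst_le[of a a'] unfolding x
      by linarith
    ultimately have fa: "norm (f - a) \<le> norm x + Ca * (M * norm x)" by linarith
    have "f' - a' = scaleC \<mu> (f - a)"
      using aw by (simp add: w_def scaleC_diff_right algebra_simps)
    then have "((f - a, scaleC \<mu> (f - a)), (h, h' - k')) \<in> G" using G_diff[OF fG aG] by simp
    then have "norm (h' - k') \<le> \<bar>C\<bar> * norm (f - a)"
      using C by (meson abs_ge_self mult_right_mono norm_ge_zero order_trans)
    also have "\<dots> \<le> \<bar>C\<bar> * (norm x + Ca * (M * norm x))" using fa by (simp add: mult_left_mono)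
    finally have "norm (h' - k') \<le> \<bar>C\<bar> * (1 + Ca * M) * norm x" by (simp add: algebra_simps)
    moreover have "norm k' \<le> \<bar>K\<bar> * (M * norm x)"
      using ker_Gamma0_Gamma1_le[OF control_cnj onto_cnj aG] mult_left_mono[OF w abs_ge_zero]
      unfolding aw by (rule order_trans)
    moreover have "norm h' \<le> norm (h' - k') + norm k'" by (metis diff_add_cancel norm_triangle_ineq)
    ultimately show ?thesis by (simp add: algebra_simps)
  qed
  then show ?thesis unfolding Gamma1_bounded_on_def by blast
qed

lemma Gamma1_bounded_on_defect_imp:
  assumes im: "Im \<mu> \<noteq> 0" and bounded: "Gamma1_bounded_on G (Nhat \<mu> G)"
  shows "selfadjoint_rel (ker_Gamma0 G)" and "Gamma1_bounded_on G (Domain G)"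
    and "ran_Gamma0 G = UNIV"
proof -
  obtain K where control: "Gamma0_controls_defect \<mu> K"
    using im bounded by (rule Gamma0_controls_defect_if_Gamma1_bounded)
  have onto: "Gamma0_defect \<mu> = UNIV" using im control by (rule Gamma0_defect_eq_UNIV)
  obtain K' where control_cnj: "Gamma0_controls_defect (cnj \<mu>) K'"
    using im control onto by (rule Gamma0_controls_defect_cnj)
  have onto_cnj: "Gamma0_defect (cnj \<mu>) = UNIV"
    using im control_cnj by (intro Gamma0_defect_eq_UNIV) auto
  show "selfadjoint_rel (ker_Gamma0 G)" using im onto onto_cnj by (rule selfadjoint_ker_Gamma0)
  show "Gamma1_bounded_on G (Domain G)"
    using im bounded control_cnj onto onto_cnj by (rule Gamma1_bounded_on_Domain)
  show "ran_Gamma0 G = UNIV" using onto unfolding Gamma0_defect_def ran_Gamma0_def by blast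
qed

lemma B_generalized_bt_if_Gamma1_bounded:
  assumes "Im \<mu> \<noteq> 0" and "Gamma1_bounded_on G (Nhat \<mu> G)"
  shows "B_generalized_bt A G"
  using unitary green_identity_G Gamma1_bounded_on_defect_imp[OF assms]
  unfolding B_generalized_bt_def unitary_bt_def by blast

subsection \<open>The Weyl function\<close>

lemma op_app_neg_inv_weyl:
  assumes im: "Im z \<noteq> 0" and fG: "((f, scaleC z f), (h, u)) \<in> G"
  shows "op_app (neg_inv (weyl G z)) u = - h"
proof -
  have unique: "k = h" if gG: "((g, scaleC z g), (k, u)) \<in> G" for g k
  proof -
    have dG: "((f - g, scaleC z (f - g)), (h - k, 0)) \<in> G"
      using G_diff[OF fG gG] by (simp add: scaleC_diff_right)
    then have "\<bar>Im z\<bar> * (norm (f - g))\<^sup>2 \<le> 0" using defect_norm_bound[OF dG] by simp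
    then have "f - g = 0" using im by (simp add: mult_le_0_iff)
    then have "((0, 0), (h - k, 0)) \<in> G" using dG by simp
    then have "h - k = 0" using G_zero_imp_zero by blast
    then show ?thesis by simp
  qed
  show ?thesis
    unfolding op_app_def
  proof (rule the_equality)
    show "(u, - h) \<in> neg_inv (weyl G z)" unfolding neg_inv_def weyl_def using fG by blast
    fix v assume "(u, v) \<in> neg_inv (weyl G z)"
    then obtain g k where "v = - k" "((g, scaleC z g), (k, u)) \<in> G"
      unfolding neg_inv_def weyl_def by blast
    then show "v = - h" using unique by simp
  qed
qed

lemma form_t_neg_inv_weyl:
  assumes im: "Im z \<noteq> 0" and fG: "((f, scaleC z f), (h, u)) \<in> G"
  shows "form_t z (neg_inv (weyl G z)) u u = of_real ((norm f)\<^sup>2)"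
proof -
  have "form_t z (neg_inv (weyl G z)) u u = (cinner u h - cinner h u) / (z - cnj z)"
    by (simp add: form_t_def op_app_neg_inv_weyl[OF assms] cinner_minus_left cinner_minus_right)
  also have "\<dots> = of_real ((norm f)\<^sup>2)"
    unfolding defect_green[OF fG, symmetric] using im by (simp add: complex_eq_iff)
  finally show ?thesis .
qed

lemma form_pos_lower_bound_iff_Gamma1_bounded:
  assumes im: "Im z \<noteq> 0"
  shows "form_pos_lower_bound z (neg_inv (weyl G z)) \<longleftrightarrow> Gamma1_bounded_on G (Nhat z G)"
proof
  assume "form_pos_lower_bound z (neg_inv (weyl G z))"
  then obtain c where c: "c > 0"
    and lower: "\<And>u. u \<in> Domain (neg_inv (weyl G z)) \<Longrightarrow> c * (norm u)\<^sup>2 \<le> Re (form_t z (neg_inv (weyl G z)) u u)"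
    unfolding form_pos_lower_bound_def by blast
  have "norm u \<le> (\<bar>1 / c\<bar> + 1) * norm f" if fG: "((f, scaleC z f), (h, u)) \<in> G" for f h u
  proof (rule le_mult_if_power2_le)
    have "c * (norm u)\<^sup>2 \<le> (norm f)\<^sup>2"
      using lower[of u] form_t_neg_inv_weyl[OF im fG] fG by (auto simp: Domain_neg_inv_weyl)
    then show "(norm u)\<^sup>2 \<le> 1 / c * (norm f)\<^sup>2" using c by (simp add: field_simps)
  qed simp_all
  then show "Gamma1_bounded_on G (Nhat z G)" unfolding Gamma1_bounded_on_Nhat_iff by blast
next
  assume "Gamma1_bounded_on G (Nhat z G)"
  then obtain C0 where "\<And>f h u. ((f, scaleC z f), (h, u)) \<in> G \<Longrightarrow> norm u \<le> C0 * norm f"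
    unfolding Gamma1_bounded_on_Nhat_iff by blast
  then obtain C where C0: "0 \<le> C"
    and C: "\<And>f h u. ((f, scaleC z f), (h, u)) \<in> G \<Longrightarrow> norm u \<le> C * norm f"
    by (meson abs_ge_self abs_ge_zero mult_right_mono norm_ge_zero order_trans)
  have "0 < C\<^sup>2 + 1" by (simp add: add_nonneg_pos)
  show "form_pos_lower_bound z (neg_inv (weyl G z))"
    unfolding form_pos_lower_bound_def
  proof (intro exI[of _ "1 / (C\<^sup>2 + 1)"] conjI ballI)
    fix u assume "u \<in> Domain (neg_inv (weyl G z))"
    then obtain f h where fG: "((f, scaleC z f), (h, u)) \<in> G" by (auto simp: Domain_neg_inv_weyl)
    show "Im (form_t z (neg_inv (weyl G z)) u u) = 0" by (simp add: form_t_neg_inv_weyl[OF im fG])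
    have "(norm u)\<^sup>2 \<le> C\<^sup>2 * (norm f)\<^sup>2"
      using power_mono[OF C[OF fG]] by (simp add: power_mult_distrib)
    also have "\<dots> \<le> (C\<^sup>2 + 1) * (norm f)\<^sup>2" by (intro mult_right_mono) auto
    finally show "1 / (C\<^sup>2 + 1) * (norm u)\<^sup>2 \<le> Re (form_t z (neg_inv (weyl G z)) u u)"
      using \<open>0 < C\<^sup>2 + 1\<close> by (simp add: form_t_neg_inv_weyl[OF im fG] field_simps)
  qed (use \<open>0 < C\<^sup>2 + 1\<close> in simp)
qed

end

theorem mainTheorem14:
  fixes A :: "('a::chilbert \<times> 'a) set"
    and G :: "(('a \<times> 'a) \<times> ('b::chilbert \<times> 'b)) set"
  assumes "unitary_bt A G"
  shows "((ess_selfadjoint_rel (ker_Gamma0 G) \<and> Gamma1_bounded_on G (Domain G)) \<longleftrightarrow>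
            (\<exists>z. z \<notin> \<real> \<and> selfadjoint_rel (ker_Gamma0 G) \<and> Gamma1_bounded_on G (Nhat z G)))
       \<and> ((ess_selfadjoint_rel (ker_Gamma0 G) \<and> Gamma1_bounded_on G (Domain G)) \<longleftrightarrow>
            (\<forall>z. z \<notin> \<real> \<longrightarrow> selfadjoint_rel (ker_Gamma0 G) \<and> Gamma1_bounded_on G (Nhat z G)))
       \<and> ((ess_selfadjoint_rel (ker_Gamma0 G) \<and> Gamma1_bounded_on G (Domain G)) \<longleftrightarrow>
            (\<exists>z. z \<notin> \<real> \<and> form_pos_lower_bound z (neg_inv (weyl G z))))
       \<and> ((ess_selfadjoint_rel (ker_Gamma0 G) \<and> Gamma1_bounded_on G (Domain G)) \<longleftrightarrow>
            (\<forall>z. z \<notin> \<real> \<longrightarrow> form_pos_lower_bound z (neg_inv (weyl G z))))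
       \<and> ((ess_selfadjoint_rel (ker_Gamma0 G) \<and> Gamma1_bounded_on G (Domain G)) \<longrightarrow>
            B_generalized_bt A G)"
proof -
  interpret unitary_boundary_triple A G by unfold_locales (rule assms)
  have nonreal: "z \<notin> \<real> \<longleftrightarrow> Im z \<noteq> 0" for z by (simp add: complex_is_Real_iff)
  have "\<i> \<notin> \<real>" by (simp add: nonreal)
  moreover have "selfadjoint_rel (ker_Gamma0 G) \<and> Gamma1_bounded_on G (Nhat z G)"
    if "ess_selfadjoint_rel (ker_Gamma0 G) \<and> Gamma1_bounded_on G (Domain G)" "z \<notin> \<real>" for z
    using that Gamma1_bounded_on_subset[OF Nhat_subset_Domain] Gamma1_bounded_on_defect_imp(1) nonreal
    by blast
  moreover have "ess_selfadjoint_rel (ker_Gamma0 G) \<and> Gamma1_bounded_on G (Domain G)"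
    if "z \<notin> \<real>" "Gamma1_bounded_on G (Nhat z G)" for z
    using that Gamma1_bounded_on_defect_imp(1,2) ess_selfadjoint_rel_if_selfadjoint_rel nonreal
    by blast
  moreover have "form_pos_lower_bound z (neg_inv (weyl G z)) \<longleftrightarrow> Gamma1_bounded_on G (Nhat z G)"
    if "z \<notin> \<real>" for z
    using that form_pos_lower_bound_iff_Gamma1_bounded nonreal by blast
  moreover have "B_generalized_bt A G" if "z \<notin> \<real>" "Gamma1_bounded_on G (Nhat z G)" for z
    using that B_generalized_bt_if_Gamma1_bounded nonreal by blast
  ultimately show ?thesis by (intro conjI iffI impI) blast+
qed

end
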